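(* Let $K$ be a field of characteristic $p>0$ and $A^*$ a graded Hopf algebra over $K$ with a decreasing filtration $\mathfrak F=(F_iA^* )_{i\in\mathbb Z}$ satisfying (E1), (E2), (E3), (E4), (E6), (E7), (E8). A left $A^*$-module $M^*$ with structure map $\alpha\colon A^*\otimes M^*\to M^*$ is unstable with respect to $\mathfrak F$ if and only if $\alpha\big((F_{2i+\varepsilon}A^* )^{2i(p-1)+\varepsilon}\otimes M^k\big)=\{0\}$ for all $i\in\mathbb Z$, $\varepsilon\in\{0,1\}$ and $k\in\mathbb Z$ with $k<2i+\varepsilon$.
   Context: Let $A^*$ be a graded Hopf algebra over a field $K$ of characteristic $p$, with product $\mu$ and a decreasing filtration $\mathfrak F=(F_iA^* )_{i\in\mathbb Z}$ by graded subspaces. A left $A^*$-module $M^*$ with structure map $\alpha$ is unstable if $\alpha(F_{n+1}A^*\otimes M^n)=\{0\}$ for all $n\in\mathbb Z$. Put $E_i^jA^*=(F_iA^* )^j/(F_{i+1}A^* )^j$. Conditions: (E1) $F_iA^*=A^*$ for $i\le0$; (E2) $\bigcap_iF_iA^*=\{0\}$; (E3) each $F_iA^*$ is a left ideal; (E4) $\mu(F_iA^*\otimes A^j)\subset F_{i-j}A^*$ for all $i,j$; (E6) for $i,k\in\mathbb Z$, $\varepsilon\in\{0,1\}$, $E_{2i+\varepsilon}^kA^*=\{0\}$ if $k<2i(p-1)+\varepsilon$ or $2i+\varepsilon+k\not\equiv0,2\pmod{2p}$; (E7) $\dim E_{2i+\varepsilon}^{2i(p-1)+\varepsilon}A^*=1$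 for $i\ge0$, $\varepsilon\in\{0,1\}$; (E8) for all integers $i,j\ge0$ and $\varepsilon\in\{0,1\}$, the map $\tilde\mu_{2i+\varepsilon}^{2i(p-1)+\varepsilon,j}\colon E_{2i+\varepsilon}^{2i(p-1)+\varepsilon}A^*\otimes(A^*/F_{2i-j+\varepsilon+1}A^* )^j\to E_{2i-j+\varepsilon}^{2i(p-1)+j+\varepsilon}A^*$, $[a]\otimes[b]\mapsto[ab]$ (well defined by (E3),(E4)), is an isomorphism. *)

theory Defs
  imports Complex_Main
begin

(* A graded vector space over the field 'k: the ambient type 'v (a K-vector space
   via the scalar multiplication s) is the internal direct sum of the subspaces V j,
   j \<in> int (V j = V^j, the homogeneous part of degree j). *)
definition graded_vs :: "('k::field \<Rightarrow> 'v::ab_group_add \<Rightarrow> 'v) \<Rightarrow> (int \<Rightarrow> 'v set) \<Rightarrow> bool" where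
  "graded_vs s V \<longleftrightarrow> vector_space s
     \<and> (\<forall>j. module.subspace s (V j))
     \<and> module.span s (\<Union>j. V j) = UNIV
     \<and> (\<forall>J f. finite J \<longrightarrow> (\<forall>j\<in>J. f j \<in> V j) \<longrightarrow> (\<Sum>j\<in>J. f j) = 0 \<longrightarrow> (\<forall>j\<in>J. f j = 0))"

definition graded_subspace :: "('k::field \<Rightarrow> 'v::ab_group_add \<Rightarrow> 'v) \<Rightarrow> (int \<Rightarrow> 'v set) \<Rightarrow> 'v set \<Rightarrow> bool" where
  "graded_subspace s V S \<longleftrightarrow> module.subspace s S \<and> S \<subseteq> module.span s (\<Union>j. S \<inter> V j)"

definition graded_algebra :: "('k::field \<Rightarrow> 'a::ab_group_add \<Rightarrow> 'a) \<Rightarrow> (int \<Rightarrow> 'a set)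
    \<Rightarrow> ('a \<Rightarrow> 'a \<Rightarrow> 'a) \<Rightarrow> 'a \<Rightarrow> bool" where
  "graded_algebra s A mul one \<longleftrightarrow> graded_vs s A
     \<and> (\<forall>x y z. mul (x + y) z = mul x z + mul y z)
     \<and> (\<forall>x y z. mul x (y + z) = mul x y + mul x z)
     \<and> (\<forall>c x y. mul (s c x) y = s c (mul x y))
     \<and> (\<forall>c x y. mul x (s c y) = s c (mul x y))
     \<and> (\<forall>x y z. mul (mul x y) z = mul x (mul y z))
     \<and> one \<in> A 0 \<and> (\<forall>x. mul one x = x \<and> mul x one = x)
     \<and> (\<forall>i j x y. x \<in> A i \<longrightarrow> y \<in> A j \<longrightarrow> mul x y \<in> A (i + j))"

(* A graded left module over the graded algebra (A, mul, one); the structure map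
   alpha : A \<otimes> M \<rightarrow> M is given as the bilinear map act *)
definition graded_left_module :: "('k::field \<Rightarrow> 'a::ab_group_add \<Rightarrow> 'a) \<Rightarrow> (int \<Rightarrow> 'a set)
    \<Rightarrow> ('a \<Rightarrow> 'a \<Rightarrow> 'a) \<Rightarrow> 'a
    \<Rightarrow> ('k \<Rightarrow> 'm::ab_group_add \<Rightarrow> 'm) \<Rightarrow> (int \<Rightarrow> 'm set) \<Rightarrow> ('a \<Rightarrow> 'm \<Rightarrow> 'm) \<Rightarrow> bool" where
  "graded_left_module s A mul one sM M act \<longleftrightarrow> graded_vs sM M
     \<and> (\<forall>x y m. act (x + y) m = act x m + act y m)
     \<and> (\<forall>x m n. act x (m + n) = act x m + act x n)
     \<and> (\<forall>c x m. act (s c x) m = sM c (act x m))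
     \<and> (\<forall>c x m. act x (sM c m) = sM c (act x m))
     \<and> (\<forall>x y m. act (mul x y) m = act x (act y m))
     \<and> (\<forall>m. act one m = m)
     \<and> (\<forall>i j x m. x \<in> A i \<longrightarrow> m \<in> M j \<longrightarrow> act x m \<in> M (i + j))"

(* dim_K (S/T) = n, for subspaces T \<subseteq> S, stated via a finite family of n vectors of S
   whose classes form a basis of S/T *)
definition quot_dim :: "('k::field \<Rightarrow> 'v::ab_group_add \<Rightarrow> 'v) \<Rightarrow> 'v set \<Rightarrow> 'v set \<Rightarrow> nat \<Rightarrow> bool" where
  "quot_dim s S T n \<longleftrightarrow> (\<exists>B. finite B \<and> card B = n \<and> B \<subseteq> S
     \<and> (\<forall>c. (\<Sum>b\<in>B. s (c b) b) \<in> T \<longrightarrow> (\<forall>b\<in>B. c b = 0))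
     \<and> S \<subseteq> {x + t | x t. x \<in> module.span s B \<and> t \<in> T})"

definition quot_basis :: "('k::field \<Rightarrow> 'v::ab_group_add \<Rightarrow> 'v) \<Rightarrow> 'v set \<Rightarrow> 'v set \<Rightarrow> 'v set \<Rightarrow> bool" where
  "quot_basis s U U0 B \<longleftrightarrow> B \<subseteq> U
     \<and> (\<forall>B' c. finite B' \<longrightarrow> B' \<subseteq> B \<longrightarrow> (\<Sum>b\<in>B'. s (c b) b) \<in> U0 \<longrightarrow> (\<forall>b\<in>B'. c b = 0))
     \<and> U \<subseteq> {x + t | x t. x \<in> module.span s B \<and> t \<in> U0}"

(* The linear map (U/U0) \<otimes>_K (V/V0) \<rightarrow> W/W0, [u] \<otimes> [v] \<mapsto> [beta u v], is an isomorphism.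
   Every element of (U/U0) \<otimes> (V/V0) is uniquely a finite sum \<Sum> [b] \<otimes> [v_b] with b
   running over a basis of U/U0; so bijectivity means: for every basis B of U/U0,
   (surjectivity) every w \<in> W is congruent mod W0 to some finite \<Sum> beta b v_b, and
   (injectivity) if a finite \<Sum> beta b v_b lies in W0 then all v_b lie in V0. *)
definition quot_tensor_iso :: "('k::field \<Rightarrow> 'a::ab_group_add \<Rightarrow> 'a) \<Rightarrow> ('a \<Rightarrow> 'a \<Rightarrow> 'a)
    \<Rightarrow> 'a set \<Rightarrow> 'a set \<Rightarrow> 'a set \<Rightarrow> 'a set \<Rightarrow> 'a set \<Rightarrow> 'a set \<Rightarrow> bool" where
  "quot_tensor_iso s beta U U0 V V0 W W0 \<longleftrightarrow> (\<forall>B. quot_basis s U U0 B \<longrightarrow>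
      (\<forall>w\<in>W. \<exists>B' v. finite B' \<and> B' \<subseteq> B \<and> (\<forall>b\<in>B'. v b \<in> V)
                   \<and> w - (\<Sum>b\<in>B'. beta b (v b)) \<in> W0)
    \<and> (\<forall>B' v. finite B' \<longrightarrow> B' \<subseteq> B \<longrightarrow> (\<forall>b\<in>B'. v b \<in> V)
                   \<longrightarrow> (\<Sum>b\<in>B'. beta b (v b)) \<in> W0 \<longrightarrow> (\<forall>b\<in>B'. v b \<in> V0)))"

definition unstable :: "(int \<Rightarrow> 'a set) \<Rightarrow> (int \<Rightarrow> 'm::zero set) \<Rightarrow> ('a \<Rightarrow> 'm \<Rightarrow> 'm) \<Rightarrow> bool" where
  "unstable F M act \<longleftrightarrow> (\<forall>n a m. a \<in> F (n + 1) \<longrightarrow> m \<in> M n \<longrightarrow> act a m = 0)"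

end

theory Submission
  imports Defs
begin

(* The forward implication is immediate because the filtration decreases.
   For the converse fix m in M^n.  Since each F_i A is graded and x |-> x.m is
   K-linear, it suffices to kill homogeneous x in F_{n+1} A^j.  Conditions
   (E2) and (E6) force F_N A^j = 0 for N large, so we argue by downward
   induction on the filtration degree i >= n+1.  Conditions (E6)-(E8) show
   that every element of F_i A^j is, modulo F_{i+1} A^j, a sum of products
   b.v with b a generator in (F_{2i'+e} A)^{2i'(p-1)+e} and v in A^{j'},
   where 2i'+e - j' = i.  Then (b.v).m = b.(v.m) with v.m of degree
   j'+n < 2i'+e, which vanishes by hypothesis. *)


lemma filtration_antimono:
  fixes F :: "int \<Rightarrow> 'a set"
  assumes decr: "\<forall>i. F (i + 1) \<subseteq> F i" and "i \<le> j"
  shows "F j \<subseteq> F i"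
  using \<open>i \<le> j\<close>
proof (induction j rule: int_ge_induct)
  case base
  then show ?case by simp
next
  case (step k)
  then show ?case using decr by blast
qed

lemma stationary_filtration_vanishes:
  fixes F :: "int \<Rightarrow> 'a::zero set"
  assumes decr: "\<forall>i. F (i + 1) \<subseteq> F i"
    and separated: "(\<Inter>i. F i) = {0}"
    and stationary: "\<And>i. i \<ge> N \<Longrightarrow> F i \<inter> X \<subseteq> F (i + 1)"
  shows "F N \<inter> X \<subseteq> {0}"
proof
  fix y assume y: "y \<in> F N \<inter> X"
  have above: "y \<in> F i" if "i \<ge> N" for i
    using that
  proof (induction i rule: int_ge_induct)
    case base
    then show ?case using y by simp
  next
    case (step i)
    then show ?case using stationary y by blast
  qed
  have "y \<in> F i" for i
    using above[of "max i N"] filtration_antimono[OF decr, of i "max i N"] by auto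
  then show "y \<in> {0}" using separated by blast
qed

lemma downward_filtration_induction:
  fixes F :: "int \<Rightarrow> 'a::zero set"
  assumes decr: "\<forall>i. F (i + 1) \<subseteq> F i"
    and vanishes: "F N \<inter> X \<subseteq> {0}" and "0 \<in> Z"
    and descend: "\<And>i. i \<ge> n \<Longrightarrow> F (i + 1) \<inter> X \<subseteq> Z \<Longrightarrow> F i \<inter> X \<subseteq> Z"
  shows "F n \<inter> X \<subseteq> Z"
proof -
  have top: "F (max n N) \<inter> X \<subseteq> Z"
    using filtration_antimono[OF decr, of N "max n N"] vanishes \<open>0 \<in> Z\<close> by auto
  have "n \<le> i \<longrightarrow> F i \<inter> X \<subseteq> Z" if "i \<le> max n N" for i
    using that
  proof (induction i rule: int_le_induct)
    case base
    then show ?case using top by blast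
  next
    case (step i)
    then show ?case using descend[of "i - 1"] by (cases "n \<le> i") auto
  qed
  then show ?thesis by simp
qed

lemma quot_dim_0_subset:
  assumes "vector_space s" and "quot_dim s S T 0"
  shows "S \<subseteq> T"
proof -
  interpret V: vector_space s by fact
  from assms(2) obtain B where "card B = 0" "finite B"
    and "S \<subseteq> {x + t | x t. x \<in> V.span B \<and> t \<in> T}"
    unfolding quot_dim_def by blast
  then show ?thesis by auto
qed

lemma quot_dim_1_basis:
  assumes "vector_space s" and "quot_dim s U U0 1"
  obtains B where "quot_basis s U U0 B"
proof -
  interpret V: vector_space s by fact
  from assms(2) obtain B where B: "card B = 1" "B \<subseteq> U"
    "\<forall>c. (\<Sum>b\<in>B. s (c b) b) \<in> U0 \<longrightarrow> (\<forall>b\<in>B. c b = 0)"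
    "U \<subseteq> {x + t | x t. x \<in> V.span B \<and> t \<in> U0}"
    unfolding quot_dim_def by blast
  then obtain b where b: "B = {b}" using card_1_singletonE by blast
  have "\<forall>b\<in>B'. c b = 0" if "B' \<subseteq> B" "(\<Sum>b\<in>B'. s (c b) b) \<in> U0" for B' c
    using that B(3) b by (cases "B' = {}") (auto simp: subset_singleton_iff)
  then have "quot_basis s U U0 B"
    using B unfolding quot_basis_def by blast
  then show ?thesis by (rule that)
qed

lemma quot_tensor_iso_surj:
  assumes iso: "quot_tensor_iso s beta U U0 V V0 W W0" and B: "quot_basis s U U0 B"
    and w: "w \<in> W"
  obtains B' v where "finite B'" "B' \<subseteq> B" "\<forall>b\<in>B'. v b \<in> V"
    "w - (\<Sum>b\<in>B'. beta b (v b)) \<in> W0"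
proof -
  have "\<forall>w\<in>W. \<exists>B' v. finite B' \<and> B' \<subseteq> B \<and> (\<forall>b\<in>B'. v b \<in> V)
          \<and> w - (\<Sum>b\<in>B'. beta b (v b)) \<in> W0"
    using iso[unfolded quot_tensor_iso_def, rule_format, OF B] by (rule conjunct1)
  then show ?thesis using w that by blast
qed

(* The numerology behind (E6)/(E8): if a bidegree (i, j) = (2a+\<delta>, j) escapes
   the vanishing range of (E6), then it is the target bidegree
   (2i'-j'+e, 2i'(p-1)+j'+e) of the product map of (E8) for some admissible
   i', j' \<ge> 0 and e \<in> {0,1}. *)
lemma bidegree_decomposition:
  fixes p a \<delta> j :: int
  assumes p: "p \<ge> 2" and a: "a \<ge> 0" and \<delta>: "\<delta> \<in> {0, 1}"
    and j: "j \<ge> 2 * a * (p - 1) + \<delta>" and congr: "(2 * a + \<delta> + j) mod (2 * p) \<in> {0, 2}"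
  obtains i' j' e where "i' \<ge> 0" "j' \<ge> 0" "e \<in> {0, 1}"
    "2 * i' - j' + e = 2 * a + \<delta>" "2 * i' * (p - 1) + j' + e = j"
proof -
  define i' where "i' = (2 * a + \<delta> + j) div (2 * p)"
  define e where "e = (2 * a + \<delta> + j) mod (2 * p) div 2"
  have e: "e \<in> {0, 1}" using congr unfolding e_def by auto
  have "(2 * a + \<delta> + j) mod (2 * p) = 2 * e" using congr unfolding e_def by auto
  then have total: "2 * a + \<delta> + j = 2 * (p * i') + 2 * e"
    unfolding i'_def by (metis mult_div_mod_eq mult.assoc)
  have "2 * a * (p - 1) = 2 * (p * a) - 2 * a" by (simp add: algebra_simps)
  then have lower: "p * i' + e \<ge> p * a + \<delta>"
    using total j \<delta> by linarith
  have "i' \<ge> a"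
  proof (rule ccontr)
    assume "\<not> i' \<ge> a"
    then have "p * i' \<le> p * (a - 1)" using p by (intro mult_left_mono) auto
    moreover have "p * (a - 1) = p * a - p" by (simp add: algebra_simps)
    ultimately show False using lower p e \<delta> by auto
  qed
  have "2 * i' * (p - 1) = 2 * (p * i') - 2 * i'" by (simp add: algebra_simps)
  then have target: "2 * i' * (p - 1) + (2 * i' + e - (2 * a + \<delta>)) + e = j"
    using total by linarith
  have "2 * i' + e \<ge> 2 * a + \<delta>"
  proof (cases "i' = a")
    case True
    then show ?thesis using lower by simp
  next
    case False
    then show ?thesis using \<open>i' \<ge> a\<close> \<delta> e by auto
  qed
  then show ?thesis
    using that[of i' "2 * i' + e - (2 * a + \<delta>)" e] target \<open>i' \<ge> a\<close> a e by auto
qed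

lemma structure_map_linear:
  assumes "vector_space s" and "graded_left_module s A mul one sM M act"
  shows "Vector_Spaces.linear s sM (\<lambda>x. act x m)"
  using assms unfolding Vector_Spaces.linear_iff graded_left_module_def graded_vs_def by blast

(* A filtered graded algebra over a field of characteristic p \<ge> 2 satisfying
   (E1), (E2), (E6), (E7) and (E8). *)
locale filtered_steenrod_algebra =
  fixes s :: "'k::field \<Rightarrow> 'a::ab_group_add \<Rightarrow> 'a"
    and A :: "int \<Rightarrow> 'a set" and mul :: "'a \<Rightarrow> 'a \<Rightarrow> 'a"
    and F :: "int \<Rightarrow> 'a set" and p :: nat
  assumes vs: "vector_space s" and p_ge_2: "p \<ge> 2"
    and filt_decr: "\<forall>i. F (i + 1) \<subseteq> F i"
    and E1: "\<forall>i \<le> 0. F i = UNIV"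
    and E2: "(\<Inter>i. F i) = {0}"
    and E6: "\<forall>i k \<epsilon>::int. \<epsilon> \<in> {0, 1} \<longrightarrow>
               (k < 2 * i * (int p - 1) + \<epsilon> \<or> (2 * i + \<epsilon> + k) mod (2 * int p) \<notin> {0, 2})
               \<longrightarrow> quot_dim s (F (2 * i + \<epsilon>) \<inter> A k) (F (2 * i + \<epsilon> + 1) \<inter> A k) 0"
    and E7: "\<forall>i \<epsilon>::int. i \<ge> 0 \<longrightarrow> \<epsilon> \<in> {0, 1} \<longrightarrow>
               quot_dim s (F (2 * i + \<epsilon>) \<inter> A (2 * i * (int p - 1) + \<epsilon>))
                          (F (2 * i + \<epsilon> + 1) \<inter> A (2 * i * (int p - 1) + \<epsilon>)) 1"
    and E8: "\<forall>i j \<epsilon>::int. i \<ge> 0 \<longrightarrow> j \<ge> 0 \<longrightarrow> \<epsilon> \<in> {0, 1} \<longrightarrow>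
               quot_tensor_iso s mul
                 (F (2 * i + \<epsilon>) \<inter> A (2 * i * (int p - 1) + \<epsilon>))
                 (F (2 * i + \<epsilon> + 1) \<inter> A (2 * i * (int p - 1) + \<epsilon>))
                 (A j)
                 (F (2 * i - j + \<epsilon> + 1) \<inter> A j)
                 (F (2 * i - j + \<epsilon>) \<inter> A (2 * i * (int p - 1) + j + \<epsilon>))
                 (F (2 * i - j + \<epsilon> + 1) \<inter> A (2 * i * (int p - 1) + j + \<epsilon>))"
begin

lemma E6_gap:
  assumes "\<epsilon> \<in> {0, 1}"
    and "k < 2 * i * (int p - 1) + \<epsilon> \<or> (2 * i + \<epsilon> + k) mod (2 * int p) \<notin> {0, 2}"
  shows "F (2 * i + \<epsilon>) \<inter> A k \<subseteq> F (2 * i + \<epsilon> + 1)"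
  using quot_dim_0_subset[OF vs E6[rule_format, OF assms]] by blast

lemma homogeneous_eventually_zero: "F (2 * \<bar>j\<bar> + 2) \<inter> A j \<subseteq> {0}"
proof (rule stationary_filtration_vanishes[OF filt_decr E2])
  fix i assume "i \<ge> 2 * \<bar>j\<bar> + 2"
  define a where "a = i div 2"
  define \<delta> where "\<delta> = i mod 2"
  have i: "i = 2 * a + \<delta>" and \<delta>: "\<delta> \<in> {0, 1}" unfolding a_def \<delta>_def by auto
  have a: "a \<ge> \<bar>j\<bar> + 1" using \<open>i \<ge> 2 * \<bar>j\<bar> + 2\<close> i \<delta> by auto
  have "2 * a * 1 \<le> 2 * a * (int p - 1)"
    using p_ge_2 a by (intro mult_left_mono) auto
  then have "j < 2 * a * (int p - 1) + \<delta>" using a \<delta> by auto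
  then show "F i \<inter> A j \<subseteq> F (i + 1)" using E6_gap[OF \<delta>] i by blast
qed

lemma associated_graded_generated:
  assumes y: "y \<in> F i \<inter> A j"
  obtains i' j' e B v where "e \<in> {0, 1}" "2 * i' - j' + e = i" "finite B"
    "\<forall>b\<in>B. b \<in> F (2 * i' + e) \<inter> A (2 * i' * (int p - 1) + e) \<and> v b \<in> A j'"
    "y - (\<Sum>b\<in>B. mul b (v b)) \<in> F (i + 1) \<inter> A j"
proof (cases "y \<in> F (i + 1)")
  case True
  show ?thesis
    by (rule that[where i' = 0 and j' = "- i" and e = 0 and B = "{}"]) (use True y in auto)
next
  case False
  then have "i \<ge> 0" using E1 by (cases "i + 1 \<le> 0") auto
  define a where "a = i div 2"
  define \<delta> where "\<delta> = i mod 2"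
  have i: "i = 2 * a + \<delta>" and \<delta>: "\<delta> \<in> {0, 1}" and a: "a \<ge> 0"
    using \<open>i \<ge> 0\<close> unfolding a_def \<delta>_def by auto
  have "\<not> (j < 2 * a * (int p - 1) + \<delta> \<or> (2 * a + \<delta> + j) mod (2 * int p) \<notin> {0, 2})"
    using E6_gap[OF \<delta>, of j a] False y unfolding i by blast
  then have admissible: "j \<ge> 2 * a * (int p - 1) + \<delta>"
      "(2 * a + \<delta> + j) mod (2 * int p) \<in> {0, 2}"
    by auto
  have "int p \<ge> 2" using p_ge_2 by simp
  then obtain i' j' e where i': "i' \<ge> 0" "j' \<ge> 0" "e \<in> {0, 1}"
    and "2 * i' - j' + e = 2 * a + \<delta>" "2 * i' * (int p - 1) + j' + e = j"
    by (rule bidegree_decomposition[OF _ a \<delta> admissible])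
  then have degrees: "2 * i' - j' + e = i" "2 * i' * (int p - 1) + j' + e = j"
    using i by simp_all
  obtain B where B: "quot_basis s (F (2 * i' + e) \<inter> A (2 * i' * (int p - 1) + e))
      (F (2 * i' + e + 1) \<inter> A (2 * i' * (int p - 1) + e)) B"
    using quot_dim_1_basis[OF vs E7[rule_format, OF i'(1,3)]] by blast
  have iso: "quot_tensor_iso s mul
      (F (2 * i' + e) \<inter> A (2 * i' * (int p - 1) + e))
      (F (2 * i' + e + 1) \<inter> A (2 * i' * (int p - 1) + e))
      (A j') (F (i + 1) \<inter> A j') (F i \<inter> A j) (F (i + 1) \<inter> A j)"
    using E8[rule_format, OF i'] unfolding degrees .
  obtain B' v where "finite B'" "B' \<subseteq> B" "\<forall>b\<in>B'. v b \<in> A j'"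
    "y - (\<Sum>b\<in>B'. mul b (v b)) \<in> F (i + 1) \<inter> A j"
    by (rule quot_tensor_iso_surj[OF iso B y])
  moreover have "B \<subseteq> F (2 * i' + e) \<inter> A (2 * i' * (int p - 1) + e)"
    using B unfolding quot_basis_def by blast
  ultimately show ?thesis using that[where i' = i' and j' = j' and e = e and B = B' and v = v] i' degrees by blast
qed

lemma act_vanishes_on_homogeneous:
  assumes module: "graded_left_module s A mul one sM M act"
    and generators: "\<forall>i k \<epsilon>::int. \<epsilon> \<in> {0, 1} \<longrightarrow> k < 2 * i + \<epsilon> \<longrightarrow>
       (\<forall>a m. a \<in> F (2 * i + \<epsilon>) \<inter> A (2 * i * (int p - 1) + \<epsilon>) \<longrightarrow> m \<in> M k \<longrightarrow> act a m = 0)"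
    and m: "m \<in> M n"
  shows "F (n + 1) \<inter> A j \<subseteq> {x. act x m = 0}"
proof -
  interpret act_m: Vector_Spaces.linear s sM "\<lambda>x. act x m"
    by (rule structure_map_linear[OF vs module])
  have act_mul: "act (mul x y) m = act x (act y m)" for x y
    using module unfolding graded_left_module_def by blast
  have act_deg: "act x m' \<in> M (i + k)" if "x \<in> A i" "m' \<in> M k" for x m' i k
    using module that unfolding graded_left_module_def by blast
  show ?thesis
  proof (rule downward_filtration_induction[OF filt_decr homogeneous_eventually_zero])
    show "0 \<in> {x. act x m = 0}" by simp
  next
    fix i assume "i \<ge> n + 1" and IH: "F (i + 1) \<inter> A j \<subseteq> {x. act x m = 0}"
    show "F i \<inter> A j \<subseteq> {x. act x m = 0}"
    proof
      fix y assume "y \<in> F i \<inter> A j"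
      then obtain i' j' e B v where e: "e \<in> {0, 1}" and deg: "2 * i' - j' + e = i"
        and B: "\<forall>b\<in>B. b \<in> F (2 * i' + e) \<inter> A (2 * i' * (int p - 1) + e) \<and> v b \<in> A j'"
        and rest: "y - (\<Sum>b\<in>B. mul b (v b)) \<in> F (i + 1) \<inter> A j"
        by (rule associated_graded_generated)
      have "act (mul b (v b)) m = 0" if "b \<in> B" for b
      proof -
        have "act (v b) m \<in> M (j' + n)" using act_deg B m that by blast
        moreover have "j' + n < 2 * i' + e" using \<open>i \<ge> n + 1\<close> deg by simp
        ultimately have "act b (act (v b) m) = 0" using generators e B that by blast
        then show ?thesis by (simp add: act_mul)
      qed
      then have "act (\<Sum>b\<in>B. mul b (v b)) m = 0" by (simp add: act_m.sum)
      moreover have "act (y - (\<Sum>b\<in>B. mul b (v b))) m = 0" using IH rest by blast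
      ultimately show "y \<in> {x. act x m = 0}" by (simp add: act_m.diff)
    qed
  qed
qed

end

theorem proposition3p5:
  fixes s :: "'k::field \<Rightarrow> 'a::ab_group_add \<Rightarrow> 'a"
    and A :: "int \<Rightarrow> 'a set" and mul :: "'a \<Rightarrow> 'a \<Rightarrow> 'a" and one :: 'a
    and F :: "int \<Rightarrow> 'a set"
    and sM :: "'k \<Rightarrow> 'm::ab_group_add \<Rightarrow> 'm" and M :: "int \<Rightarrow> 'm set"
    and act :: "'a \<Rightarrow> 'm \<Rightarrow> 'm"
    and p :: nat
  assumes char: "CHAR('k) = p" and p_pos: "p > 0"
    and alg: "graded_algebra s A mul one"
    and filt_graded: "\<forall>i. graded_subspace s A (F i)"
    and filt_decr: "\<forall>i. F (i + 1) \<subseteq> F i"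
    and E1: "\<forall>i \<le> 0. F i = UNIV"
    and E2: "(\<Inter>i. F i) = {0}"
    and E3: "\<forall>i a x. x \<in> F i \<longrightarrow> mul a x \<in> F i"
    and E4: "\<forall>i j a b. a \<in> F i \<longrightarrow> b \<in> A j \<longrightarrow> mul a b \<in> F (i - j)"
    and E6: "\<forall>i k \<epsilon>::int. \<epsilon> \<in> {0, 1} \<longrightarrow>
               (k < 2 * i * (int p - 1) + \<epsilon> \<or> (2 * i + \<epsilon> + k) mod (2 * int p) \<notin> {0, 2})
               \<longrightarrow> quot_dim s (F (2 * i + \<epsilon>) \<inter> A k) (F (2 * i + \<epsilon> + 1) \<inter> A k) 0"
    and E7: "\<forall>i \<epsilon>::int. i \<ge> 0 \<longrightarrow> \<epsilon> \<in> {0, 1} \<longrightarrow>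
               quot_dim s (F (2 * i + \<epsilon>) \<inter> A (2 * i * (int p - 1) + \<epsilon>))
                          (F (2 * i + \<epsilon> + 1) \<inter> A (2 * i * (int p - 1) + \<epsilon>)) 1"
    and E8: "\<forall>i j \<epsilon>::int. i \<ge> 0 \<longrightarrow> j \<ge> 0 \<longrightarrow> \<epsilon> \<in> {0, 1} \<longrightarrow>
               quot_tensor_iso s mul
                 (F (2 * i + \<epsilon>) \<inter> A (2 * i * (int p - 1) + \<epsilon>))
                 (F (2 * i + \<epsilon> + 1) \<inter> A (2 * i * (int p - 1) + \<epsilon>))
                 (A j)
                 (F (2 * i - j + \<epsilon> + 1) \<inter> A j)
                 (F (2 * i - j + \<epsilon>) \<inter> A (2 * i * (int p - 1) + j + \<epsilon>))
                 (F (2 * i - j + \<epsilon> + 1) \<inter> A (2 * i * (int p - 1) + j + \<epsilon>))"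
    and module: "graded_left_module s A mul one sM M act"
  shows "unstable F M act \<longleftrightarrow>
    (\<forall>i k \<epsilon>::int. \<epsilon> \<in> {0, 1} \<longrightarrow> k < 2 * i + \<epsilon> \<longrightarrow>
       (\<forall>a m. a \<in> F (2 * i + \<epsilon>) \<inter> A (2 * i * (int p - 1) + \<epsilon>) \<longrightarrow> m \<in> M k \<longrightarrow> act a m = 0))"
  proof
  assume "unstable F M act"
  then show "\<forall>i k \<epsilon>::int. \<epsilon> \<in> {0, 1} \<longrightarrow> k < 2 * i + \<epsilon> \<longrightarrow>
      (\<forall>a m. a \<in> F (2 * i + \<epsilon>) \<inter> A (2 * i * (int p - 1) + \<epsilon>) \<longrightarrow> m \<in> M k \<longrightarrow> act a m = 0)"
    using filtration_antimono[OF filt_decr] unfolding unstable_def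
    by (metis IntD1 subsetD zless_imp_add1_zle)
next
  assume generators: "\<forall>i k \<epsilon>::int. \<epsilon> \<in> {0, 1} \<longrightarrow> k < 2 * i + \<epsilon> \<longrightarrow>
      (\<forall>a m. a \<in> F (2 * i + \<epsilon>) \<inter> A (2 * i * (int p - 1) + \<epsilon>) \<longrightarrow> m \<in> M k \<longrightarrow> act a m = 0)"
  have vs: "vector_space s" using alg unfolding graded_algebra_def graded_vs_def by blast
  have "p \<ge> 2" using char p_pos CHAR_not_1[where 'a = 'k] by linarith
  interpret filtered_steenrod_algebra s A mul F p
    by (rule filtered_steenrod_algebra.intro) fact+
  show "unstable F M act"
    unfolding unstable_def
  proof (intro allI impI)
    fix n a m assume "a \<in> F (n + 1)" and m: "m \<in> M n"
    interpret act_m: Vector_Spaces.linear s sM "\<lambda>x. act x m"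
      by (rule structure_map_linear[OF vs module])
    have "a \<in> module.span s (\<Union>j. F (n + 1) \<inter> A j)"
      using filt_graded \<open>a \<in> F (n + 1)\<close> unfolding graded_subspace_def by blast
    moreover have "act x m = 0" if "x \<in> (\<Union>j. F (n + 1) \<inter> A j)" for x
      using act_vanishes_on_homogeneous[OF module generators m] that by blast
    ultimately show "act a m = 0" using act_m.eq_0_on_span by blast
  qed
qed

end
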